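(* Let $R$ be a regular run. If Dir is set to close at some moment $\alpha$, then Dir = close over the interval $(\alpha,\alpha+d_{close})$.
   Context: Setting (evolving algebra for the railroad crossing). States are structures over a vocabulary containing: a finite universe Tracks; the reals and ExtendedReals $=\mathbb{R}\cup\{\infty\}$ with standard $<$ and $+$ ($\infty$ largest); a nullary real-valued symbol $\mathrm{CT}$ (current time); positive real constants $d_{close},d_{open},d_{min},d_{max}$ with $d_{close}<d_{min}\le d_{max}$; a unary function TrackStatus from Tracks to $\{\text{empty},\text{coming},\text{incrossing}\}$; a unary function Deadline from Tracks to ExtendedReals; a nullary Dir with values in $\{\text{open},\text{close}\}$; a nullary GateStatus with values in $\{\text{opened},\text{closed}\}$. Put $W=d_{min}-d_{close}$ and $\Delta_{close}=d_{close}+(d_{max}-d_{min})=d_{max}-W$. For a track $x$, $s(x)$ is the condition [$\mathrm{TrackStatus}(x)=\text{empty}$ or $\mathrm{CT}+d_{open}<\mathrm{Deadline}(x)$], and SafeToOpen is $\forall x\in\mathrm{Tracks}\ s(x)$. The program has two modules (agents). Gate: simultaneously OpenGate "if Dir=open then GateStatus:=opened" and CloseGate "if Dir=close then GateStatus:=closed". Controller: simultaneously, for every track $x$, SetDeadline$(x)$ "if TrackStatus$(x)$=coming and Deadline$(x)=\infty$ then Deadline$(x):=\mathrm{CT}+W$", SignalClose$(x)$ "if $\mathrm{CT}=$Deadline$(x)$ then Dir:=close", ClearDeadline$(x)$ "if TrackStatus$(x)$=empty and Deadline$(x)<\infty$ then Deadline$(x):=\infty$", together with SignalOpen "if Dir=close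 and SafeToOpen then Dir:=open". Executing a module means computing all updates it generates in the current state and performing them simultaneously (nothing happens if the update set is inconsistent). A module is enabled at a state if its update set is consistent and contains an update that changes the state. TrackStatus is external (changed only by the environment); Deadline, Dir, GateStatus are internal (changed only by the modules); other symbols are static. Runs: for $t\mapsto R(t)$, $t\in[0,\infty)$, let $\rho(t)$ be the reduct of $R(t)$ without CT. $R$ is a pre-run if all $R(t)$ share a superuniverse, $\mathrm{CT}=t$ in $R(t)$, and for every $\tau>0$ there are $0=t_0<\dots<t_n=\tau$ with $\rho$ constant on each $(t_i,t_{i+1})$. For a term $e$ (free variables fixed), $e_t$ is its value in $R(t)$, $e_{t+}$ (resp. $e_{t-}$, $t>0$) its constant value on some $(t,t+\epsilon)$ (resp. $(t-\epsilon,t)$); likewise $\rho(t\pm)$. $e$ holds over an interval if it holds at each point; $e$ becomes (is set to) $a$ at $t$ if $e_{t-}\ne a=e_t$ or $e_t\neq a=e_{t+}$. A pre-run is a run if (i) whenever $\rho(t+)\neq\rho(t)$, $\rho(t+)$ is the CT-free reduct of the result of executing some modules at $R(t)$ (these agents fire at $t$), with external functions equal in $\rho(t)$ and $\rho(t+)$; (ii) whenever $t>0$ and $\rho(t)\ne\rho(t-)$, they differ only in external functions. An agent is immediate if it fires at every moment it is enabled; bounded if immediate or there is $b>0$ with no interval $(t,t+b)$ over which it is enabled but never fires. Initial states: TrackStatus$(x)$=empty and Deadline$(x)=\infty$ for every track $x$. A regular run is a run $R$ with $R(0)$ initial such that: (Train Motion) for each track $x$ there is a finite or infinite sequence $0=t_0<t_1<t_2<\cdots$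 (the significant moments of $x$) with TrackStatus$(x)$=empty over each $[t_{3i},t_{3i+1})$, =coming over each $[t_{3i+1},t_{3i+2})$ where $d_{min}\le t_{3i+2}-t_{3i+1}\le d_{max}$, =incrossing over each $[t_{3i+2},t_{3i+3})$, and, if the sequence is finite with last element $t_k$, then $3\mid k$ and TrackStatus$(x)$=empty over $[t_k,\infty)$; (Controller Timing) Controller is immediate; (Gate Timing) Gate is bounded, there is no interval $(t,t+d_{close})$ over which Dir=close and GateStatus=opened both hold, and no interval $(t,t+d_{open})$ over which Dir=open and GateStatus=closed both hold. *)

theory Defs
  imports Main "HOL.Real"
begin

datatype tstat = Empty | Coming | Incrossing
datatype dirv = Open | Close
datatype gstat = Opened | Closed

datatype xreal = Fin real | Infty

fun xless :: "xreal \<Rightarrow> xreal \<Rightarrow> bool" where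
  "xless (Fin a) (Fin b) = (a < b)"
| "xless (Fin a) Infty = True"
| "xless Infty _ = False"

text \<open>CT-free reduct of a state (tracks form the finite type 'tr; the static
  constants d_close, d_open, d_min, d_max are passed as parameters).\<close>
record 'tr st =
  TS :: "'tr \<Rightarrow> tstat"
  DL :: "'tr \<Rightarrow> xreal"
  Dir :: dirv
  GS :: gstat

datatype agent = Gate | Controller

datatype 'tr upd = UDL 'tr xreal | UDir dirv | UGS gstat

datatype 'tr loc = LDL 'tr | LDir | LGS

fun uloc :: "'tr upd \<Rightarrow> 'tr loc" where
  "uloc (UDL x v) = LDL x"
| "uloc (UDir d) = LDir"
| "uloc (UGS g) = LGS"

definition consistent :: "'tr upd set \<Rightarrow> bool" where
  "consistent U \<longleftrightarrow> (\<forall>u\<in>U. \<forall>u'\<in>U. uloc u = uloc u' \<longrightarrow> u = u')"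

fun changes :: "'tr st \<Rightarrow> 'tr upd \<Rightarrow> bool" where
  "changes S (UDL x v) = (DL S x \<noteq> v)"
| "changes S (UDir d) = (Dir S \<noteq> d)"
| "changes S (UGS g) = (GS S \<noteq> g)"

definition SafeToOpen :: "real \<Rightarrow> real \<Rightarrow> 'tr st \<Rightarrow> bool" where
  "SafeToOpen dopen t S \<longleftrightarrow>
     (\<forall>x. TS S x = Empty \<or> xless (Fin (t + dopen)) (DL S x))"

text \<open>Update set generated by a module at state S with current time CT = t.\<close>
fun upds :: "real \<Rightarrow> real \<Rightarrow> real \<Rightarrow> agent \<Rightarrow> real \<Rightarrow> 'tr st \<Rightarrow> 'tr upd set" where
  "upds dclose dopen dmin Gate t S =
     (if Dir S = Open then {UGS Opened} else {}) \<union>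
     (if Dir S = Close then {UGS Closed} else {})"
| "upds dclose dopen dmin Controller t S =
     {UDL x (Fin (t + (dmin - dclose))) | x. TS S x = Coming \<and> DL S x = Infty} \<union>
     {UDir Close | x. Fin t = DL S x} \<union>
     {UDL x Infty | x. TS S x = Empty \<and> xless (DL S x) Infty} \<union>
     (if Dir S = Close \<and> SafeToOpen dopen t S then {UDir Open} else {})"

definition apply_upds :: "'tr upd set \<Rightarrow> 'tr st \<Rightarrow> 'tr st" where
  "apply_upds U S = S\<lparr>
     DL := (\<lambda>x. if (\<exists>v. UDL x v \<in> U) then (SOME v. UDL x v \<in> U) else DL S x),
     Dir := (if (\<exists>d. UDir d \<in> U) then (SOME d. UDir d \<in> U) else Dir S),
     GS := (if (\<exists>g. UGS g \<in> U) then (SOME g. UGS g \<in> U) else GS S)\<rparr>"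

definition exec :: "real \<Rightarrow> real \<Rightarrow> real \<Rightarrow> agent set \<Rightarrow> real \<Rightarrow> 'tr st \<Rightarrow> 'tr st" where
  "exec dclose dopen dmin M t S =
     apply_upds (\<Union>m\<in>M. if consistent (upds dclose dopen dmin m t S)
                         then upds dclose dopen dmin m t S else {}) S"

definition enabled :: "real \<Rightarrow> real \<Rightarrow> real \<Rightarrow> agent \<Rightarrow> real \<Rightarrow> 'tr st \<Rightarrow> bool" where
  "enabled dclose dopen dmin m t S \<longleftrightarrow>
     consistent (upds dclose dopen dmin m t S) \<and>
     (\<exists>u\<in>upds dclose dopen dmin m t S. changes S u)"

text \<open>rho t is the CT-free reduct of R(t) (CT = t is implicit).\<close>
definition rval :: "(real \<Rightarrow> 'a) \<Rightarrow> real \<Rightarrow> 'a" where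
  "rval f t = (THE v. \<exists>e>0. \<forall>s. t < s \<and> s < t + e \<longrightarrow> f s = v)"

definition lval :: "(real \<Rightarrow> 'a) \<Rightarrow> real \<Rightarrow> 'a" where
  "lval f t = (THE v. \<exists>e>0. \<forall>s. t - e < s \<and> s < t \<longrightarrow> f s = v)"

definition pre_run :: "(real \<Rightarrow> 'tr st) \<Rightarrow> bool" where
  "pre_run \<rho> \<longleftrightarrow>
     (\<forall>\<tau>>0. \<exists>(ts :: nat \<Rightarrow> real) n. ts 0 = 0 \<and> ts n = \<tau> \<and>
        (\<forall>i<n. ts i < ts (Suc i)) \<and>
        (\<forall>i<n. \<exists>v. \<forall>s. ts i < s \<and> s < ts (Suc i) \<longrightarrow> \<rho> s = v))"

definition is_run :: "real \<Rightarrow> real \<Rightarrow> real \<Rightarrow> (real \<Rightarrow> 'tr st) \<Rightarrow> bool" where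
  "is_run dclose dopen dmin \<rho> \<longleftrightarrow> pre_run \<rho> \<and>
     (\<forall>t\<ge>0. rval \<rho> t \<noteq> \<rho> t \<longrightarrow>
        (\<exists>M. rval \<rho> t = exec dclose dopen dmin M t (\<rho> t)) \<and> TS (rval \<rho> t) = TS (\<rho> t)) \<and>
     (\<forall>t>0. \<rho> t \<noteq> lval \<rho> t \<longrightarrow>
        DL (\<rho> t) = DL (lval \<rho> t) \<and> Dir (\<rho> t) = Dir (lval \<rho> t) \<and> GS (\<rho> t) = GS (lval \<rho> t))"

definition fires :: "real \<Rightarrow> real \<Rightarrow> real \<Rightarrow> (real \<Rightarrow> 'tr st) \<Rightarrow> agent \<Rightarrow> real \<Rightarrow> bool" where
  "fires dclose dopen dmin \<rho> m t \<longleftrightarrow> rval \<rho> t \<noteq> \<rho> t \<and>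
     (\<exists>M. m \<in> M \<and> rval \<rho> t = exec dclose dopen dmin M t (\<rho> t))"

definition immediate :: "real \<Rightarrow> real \<Rightarrow> real \<Rightarrow> (real \<Rightarrow> 'tr st) \<Rightarrow> agent \<Rightarrow> bool" where
  "immediate dclose dopen dmin \<rho> m \<longleftrightarrow>
     (\<forall>t\<ge>0. enabled dclose dopen dmin m t (\<rho> t) \<longrightarrow> fires dclose dopen dmin \<rho> m t)"

definition bounded :: "real \<Rightarrow> real \<Rightarrow> real \<Rightarrow> (real \<Rightarrow> 'tr st) \<Rightarrow> agent \<Rightarrow> bool" where
  "bounded dclose dopen dmin \<rho> m \<longleftrightarrow> immediate dclose dopen dmin \<rho> m \<or>
     (\<exists>b>0. \<not> (\<exists>t\<ge>0. (\<forall>s. t < s \<and> s < t + b \<longrightarrow> enabled dclose dopen dmin m s (\<rho> s)) \<and>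
                      (\<forall>s. t < s \<and> s < t + b \<longrightarrow> \<not> fires dclose dopen dmin \<rho> m s)))"

definition initial :: "'tr st \<Rightarrow> bool" where
  "initial S \<longleftrightarrow> (\<forall>x. TS S x = Empty \<and> DL S x = Infty)"

text \<open>Significant moments of track x: ts i for i in the index set (all i if fin = None,
  i \<le> k if fin = Some k).\<close>
definition train_motion :: "real \<Rightarrow> real \<Rightarrow> (real \<Rightarrow> 'tr st) \<Rightarrow> 'tr \<Rightarrow> bool" where
  "train_motion dmin dmax \<rho> x \<longleftrightarrow>
     (\<exists>(ts :: nat \<Rightarrow> real) (fin :: nat option).
        (let D = (\<lambda>i. case fin of None \<Rightarrow> True | Some k \<Rightarrow> i \<le> k) in
         ts 0 = 0 \<and>
         (\<forall>i. D (Suc i) \<longrightarrow> ts i < ts (Suc i)) \<and>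
         (\<forall>i. D (3*i+1) \<longrightarrow> (\<forall>s. ts (3*i) \<le> s \<and> s < ts (3*i+1) \<longrightarrow> TS (\<rho> s) x = Empty)) \<and>
         (\<forall>i. D (3*i+2) \<longrightarrow> (\<forall>s. ts (3*i+1) \<le> s \<and> s < ts (3*i+2) \<longrightarrow> TS (\<rho> s) x = Coming) \<and>
               dmin \<le> ts (3*i+2) - ts (3*i+1) \<and> ts (3*i+2) - ts (3*i+1) \<le> dmax) \<and>
         (\<forall>i. D (3*i+3) \<longrightarrow> (\<forall>s. ts (3*i+2) \<le> s \<and> s < ts (3*i+3) \<longrightarrow> TS (\<rho> s) x = Incrossing)) \<and>
         (\<forall>k. fin = Some k \<longrightarrow> 3 dvd k \<and> (\<forall>s. ts k \<le> s \<longrightarrow> TS (\<rho> s) x = Empty))))"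

definition regular_run :: "real \<Rightarrow> real \<Rightarrow> real \<Rightarrow> real \<Rightarrow> (real \<Rightarrow> 'tr st) \<Rightarrow> bool" where
  "regular_run dclose dopen dmin dmax \<rho> \<longleftrightarrow>
     is_run dclose dopen dmin \<rho> \<and> initial (\<rho> 0) \<and>
     (\<forall>x. train_motion dmin dmax \<rho> x) \<and>
     immediate dclose dopen dmin \<rho> Controller \<and>
     bounded dclose dopen dmin \<rho> Gate \<and>
     \<not> (\<exists>t\<ge>0. \<forall>s. t < s \<and> s < t + dclose \<longrightarrow> Dir (\<rho> s) = Close \<and> GS (\<rho> s) = Opened) \<and>
     \<not> (\<exists>t\<ge>0. \<forall>s. t < s \<and> s < t + dopen \<longrightarrow> Dir (\<rho> s) = Open \<and> GS (\<rho> s) = Closed)"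

text \<open>A term e (here: a function of the CT-free state) becomes a at t.\<close>
definition becomes :: "(real \<Rightarrow> 'tr st) \<Rightarrow> ('tr st \<Rightarrow> 'b) \<Rightarrow> 'b \<Rightarrow> real \<Rightarrow> bool" where
  "becomes \<rho> e a t \<longleftrightarrow>
     (t > 0 \<and> e (lval \<rho> t) \<noteq> a \<and> e (\<rho> t) = a) \<or> (e (\<rho> t) \<noteq> a \<and> e (rval \<rho> t) = a)"

end

theory Submission
  imports Defs
begin

(* Dir becomes close at alpha only through SignalClose, so some track x has Deadline(x) = alpha
   at that moment. Along any regular run a finite deadline d of x was set by SetDeadline at the
   very moment d - W when x began coming (the Controller is immediate), and every coming phase
   lasts at least dmin = W + dclose; hence x is coming throughout [alpha, alpha + dclose).
   During that interval the deadline of x stays alpha, which rules out SafeToOpen, and since only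
   SignalOpen can reset Dir, Dir stays close. Each of these invariants is propagated along the
   run by induction over the reals, using that the run is piecewise constant. *)

section \<open>Induction over the reals\<close>

lemma real_induct_ge:
  fixes a :: real and P :: "real \<Rightarrow> bool"
  assumes left: "\<And>t. a \<le> t \<Longrightarrow> (\<And>u. a \<le> u \<Longrightarrow> u < t \<Longrightarrow> P u) \<Longrightarrow> P t"
    and right: "\<And>t. a \<le> t \<Longrightarrow> (\<And>u. a \<le> u \<Longrightarrow> u \<le> t \<Longrightarrow> P u) \<Longrightarrow>
                  \<exists>e>0. \<forall>s. t < s \<and> s < t + e \<longrightarrow> P s"
    and "a \<le> t"
  shows "P t"
proof (rule ccontr)
  define S where "S = {t. a \<le> t \<and> \<not> P t}"
  assume "\<not> P t"
  then have "t \<in> S" using \<open>a \<le> t\<close> by (simp add: S_def)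
  have bdd: "bdd_below S" unfolding S_def bdd_below_def by auto
  define T where "T = Inf S"
  have "a \<le> T" unfolding T_def using \<open>t \<in> S\<close> by (intro cInf_greatest) (auto simp: S_def)
  have below_T: "P u" if "a \<le> u" "u < T" for u
    using that cInf_lower[OF _ bdd, of u] by (force simp: S_def T_def)
  then have "P T" using left[OF \<open>a \<le> T\<close>] by blast
  with below_T obtain e where "e > 0" and after_T: "\<forall>s. T < s \<and> s < T + e \<longrightarrow> P s"
    using right[OF \<open>a \<le> T\<close>] by (metis order.not_eq_order_implies_strict)
  have "Inf S < T + e" using \<open>e > 0\<close> by (simp add: T_def)
  then obtain s where "s \<in> S" "s < T + e"
    using \<open>t \<in> S\<close> bdd by (subst (asm) cInf_less_iff) auto
  moreover have "T \<le> s" using \<open>s \<in> S\<close> bdd by (simp add: T_def cInf_lower)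
  ultimately show False using after_T \<open>P T\<close> by (auto simp: S_def order.order_iff_strict)
qed

lemma ex_bracketing_index:
  fixes f :: "nat \<Rightarrow> real"
  shows "f 0 \<le> t \<Longrightarrow> t < f n \<Longrightarrow> \<exists>i<n. f i \<le> t \<and> t < f (Suc i)"
proof (induction n)
  case (Suc n)
  then show ?case by (cases "t < f n") (auto intro: less_SucI)
qed simp

lemma rval_eqI:
  assumes "e > 0" and "\<forall>s. t < s \<and> s < t + e \<longrightarrow> f s = v"
  shows "rval f t = v"
  unfolding rval_def
proof (rule the_equality)
  fix v' assume "\<exists>e>0. \<forall>s. t < s \<and> s < t + e \<longrightarrow> f s = v'"
  then obtain e' where "e' > 0" and v': "\<forall>s. t < s \<and> s < t + e' \<longrightarrow> f s = v'" by blast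
  define s where "s = t + min e e' / 2"
  have "t < s" "s < t + e" "s < t + e'" using \<open>e > 0\<close> \<open>e' > 0\<close> by (auto simp: s_def)
  then have "f s = v" "f s = v'" using assms(2) v' by auto
  then show "v' = v" by simp
qed (use assms in blast)

lemma lval_eqI:
  assumes "e > 0" and "\<forall>s. t - e < s \<and> s < t \<longrightarrow> f s = v"
  shows "lval f t = v"
  unfolding lval_def
proof (rule the_equality)
  fix v' assume "\<exists>e>0. \<forall>s. t - e < s \<and> s < t \<longrightarrow> f s = v'"
  then obtain e' where "e' > 0" and v': "\<forall>s. t - e' < s \<and> s < t \<longrightarrow> f s = v'" by blast
  define s where "s = t - min e e' / 2"
  have "t - e < s" "t - e' < s" "s < t" using \<open>e > 0\<close> \<open>e' > 0\<close> by (auto simp: s_def)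
  then have "f s = v" "f s = v'" using assms(2) v' by auto
  then show "v' = v" by simp
qed (use assms in blast)

lemma pre_run_partition:
  assumes "pre_run \<rho>" "\<tau> > 0"
  obtains ts :: "nat \<Rightarrow> real" and n where "ts 0 = 0" "ts n = \<tau>" "\<forall>i<n. ts i < ts (Suc i)"
    "\<forall>i<n. \<exists>v. \<forall>s. ts i < s \<and> s < ts (Suc i) \<longrightarrow> \<rho> s = v"
  using assms(1)[unfolded pre_run_def, rule_format, OF assms(2)] that by blast

lemma pre_run_rval:
  assumes "pre_run \<rho>" "0 \<le> t"
  obtains e where "e > 0" "\<forall>s. t < s \<and> s < t + e \<longrightarrow> \<rho> s = rval \<rho> t"
proof -
  have "t + 1 > 0" using assms(2) by simp
  obtain ts :: "nat \<Rightarrow> real" and n where ts: "ts 0 = 0" "ts n = t + 1"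
    and "\<forall>i<n. ts i < ts (Suc i)"
    and const: "\<forall>i<n. \<exists>v. \<forall>s. ts i < s \<and> s < ts (Suc i) \<longrightarrow> \<rho> s = v"
    by (rule pre_run_partition[OF assms(1) \<open>t + 1 > 0\<close>])
  obtain i where "i < n" "ts i \<le> t" "t < ts (Suc i)"
    using ex_bracketing_index[of ts t n] ts assms(2) by auto
  define e where "e = ts (Suc i) - t"
  obtain v where "\<forall>s. ts i < s \<and> s < ts (Suc i) \<longrightarrow> \<rho> s = v"
    using const \<open>i < n\<close> by blast
  then have v: "\<forall>s. t < s \<and> s < t + e \<longrightarrow> \<rho> s = v"
    using \<open>ts i \<le> t\<close> by (simp add: e_def)
  have "e > 0" using \<open>t < ts (Suc i)\<close> by (simp add: e_def)
  then have "rval \<rho> t = v" using v by (rule rval_eqI)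
  then show thesis using that \<open>e > 0\<close> v by simp
qed

lemma pre_run_lval:
  assumes "pre_run \<rho>" "0 < t"
  obtains e where "e > 0" "\<forall>s. t - e < s \<and> s < t \<longrightarrow> \<rho> s = lval \<rho> t"
proof -
  obtain ts :: "nat \<Rightarrow> real" and n where ts: "ts 0 = 0" "ts n = t"
    and incr: "\<forall>i<n. ts i < ts (Suc i)"
    and const: "\<forall>i<n. \<exists>v. \<forall>s. ts i < s \<and> s < ts (Suc i) \<longrightarrow> \<rho> s = v"
    by (rule pre_run_partition[OF assms])
  then obtain m where "n = Suc m" using assms(2) by (cases n) auto
  define e where "e = t - ts m"
  obtain v where "\<forall>s. ts m < s \<and> s < ts (Suc m) \<longrightarrow> \<rho> s = v"
    using const \<open>n = Suc m\<close> by blast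
  then have v: "\<forall>s. t - e < s \<and> s < t \<longrightarrow> \<rho> s = v"
    using ts \<open>n = Suc m\<close> by (simp add: e_def)
  have "e > 0" using incr ts \<open>n = Suc m\<close> by (auto simp: e_def)
  then have "lval \<rho> t = v" using v by (rule lval_eqI)
  then show thesis using that \<open>e > 0\<close> v by simp
qed

lemma pre_run_lval_between:
  assumes "pre_run \<rho>" "0 \<le> a" "a < t"
  obtains s where "a < s" "s < t" "\<rho> s = lval \<rho> t"
proof -
  obtain e where "e > 0" and e: "\<forall>s. t - e < s \<and> s < t \<longrightarrow> \<rho> s = lval \<rho> t"
    using pre_run_lval assms by (metis le_less_trans)
  define s where "s = t - min e (t - a) / 2"
  have "a < s" "s < t" "t - e < s" using \<open>e > 0\<close> assms(3) by (auto simp: s_def min_def field_simps)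
  with e that show thesis by blast
qed

lemma apply_upds_DL_cases: "DL (apply_upds U S) x = DL S x \<or> UDL x (DL (apply_upds U S) x) \<in> U"
  using someI_ex[of "\<lambda>v. UDL x v \<in> U"] by (simp add: apply_upds_def)

lemma apply_upds_Dir_cases: "Dir (apply_upds U S) = Dir S \<or> UDir (Dir (apply_upds U S)) \<in> U"
  using someI_ex[of "\<lambda>d. UDir d \<in> U"] by (simp add: apply_upds_def)

lemma apply_upds_DL_eqI:
  assumes "UDL x v \<in> U" and "\<And>v'. UDL x v' \<in> U \<Longrightarrow> v' = v"
  shows "DL (apply_upds U S) x = v"
proof -
  have "(SOME v'. UDL x v' \<in> U) = v" using assms by (rule some_equality)
  with assms(1) show ?thesis by (auto simp: apply_upds_def)
qed

lemma upds_Gate: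
  "upds dclose dopen dmin Gate t S = {UGS (case Dir S of Open \<Rightarrow> Opened | Close \<Rightarrow> Closed)}"
  by (cases "Dir S") simp_all

lemma UDL_mem_upds_Controller:
  "UDL x v \<in> upds dclose dopen dmin Controller t S \<longleftrightarrow>
     TS S x = Coming \<and> DL S x = Infty \<and> v = Fin (t + (dmin - dclose)) \<or>
     TS S x = Empty \<and> xless (DL S x) Infty \<and> v = Infty"
  by auto

lemma UDir_mem_upds_Controller:
  "UDir d \<in> upds dclose dopen dmin Controller t S \<longleftrightarrow>
     d = Close \<and> (\<exists>x. DL S x = Fin t) \<or> d = Open \<and> Dir S = Close \<and> SafeToOpen dopen t S"
  by (auto dest: sym)

lemma UGS_notin_upds_Controller: "UGS g \<notin> upds dclose dopen dmin Controller t S"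
  by auto

declare upds.simps [simp del]

lemma exec_update_from_Controller:
  assumes "u \<in> (\<Union>m\<in>M. if consistent (upds dclose dopen dmin m t S)
                          then upds dclose dopen dmin m t S else {})"
    and "\<And>g. u \<noteq> UGS g"
  shows "u \<in> upds dclose dopen dmin Controller t S"
proof -
  obtain m where "u \<in> upds dclose dopen dmin m t S" using assms(1) by (auto split: if_splits)
  with assms(2) show ?thesis by (cases m) (auto simp: upds_Gate)
qed

lemma exec_DL_cases:
  "DL (exec dclose dopen dmin M t S) x = DL S x \<or>
   UDL x (DL (exec dclose dopen dmin M t S) x) \<in> upds dclose dopen dmin Controller t S"
proof -
  let ?U = "\<Union>m\<in>M. if consistent (upds dclose dopen dmin m t S) then upds dclose dopen dmin m t S else {}"
  have "UDL x v \<in> ?U \<Longrightarrow> UDL x v \<in> upds dclose dopen dmin Controller t S" for v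
    by (rule exec_update_from_Controller) simp_all
  then show ?thesis unfolding exec_def using apply_upds_DL_cases[of ?U S x] by blast
qed

lemma exec_Dir_cases:
  "Dir (exec dclose dopen dmin M t S) = Dir S \<or>
   UDir (Dir (exec dclose dopen dmin M t S)) \<in> upds dclose dopen dmin Controller t S"
proof -
  let ?U = "\<Union>m\<in>M. if consistent (upds dclose dopen dmin m t S) then upds dclose dopen dmin m t S else {}"
  have "UDir d \<in> ?U \<Longrightarrow> UDir d \<in> upds dclose dopen dmin Controller t S" for d
    by (rule exec_update_from_Controller) simp_all
  then show ?thesis unfolding exec_def using apply_upds_Dir_cases[of ?U S] by blast
qed

lemma exec_DL_eqI:
  assumes "Controller \<in> M" "consistent (upds dclose dopen dmin Controller t S)"
    and "UDL x v \<in> upds dclose dopen dmin Controller t S"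
  shows "DL (exec dclose dopen dmin M t S) x = v"
  unfolding exec_def
proof (rule apply_upds_DL_eqI)
  show "UDL x v \<in> (\<Union>m\<in>M. if consistent (upds dclose dopen dmin m t S)
                              then upds dclose dopen dmin m t S else {})"
    using assms by (intro UN_I[of Controller]) simp_all
  fix v' assume "UDL x v' \<in> (\<Union>m\<in>M. if consistent (upds dclose dopen dmin m t S)
                                    then upds dclose dopen dmin m t S else {})"
  then have "UDL x v' \<in> upds dclose dopen dmin Controller t S"
    by (rule exec_update_from_Controller) simp
  then show "v' = v" using assms(2,3) unfolding consistent_def by (metis uloc.simps(1) upd.inject(1))
qed

lemma not_SafeToOpen:
  "TS S x \<noteq> Empty \<Longrightarrow> DL S x = Fin d \<Longrightarrow> d \<le> t + dopen \<Longrightarrow> \<not> SafeToOpen dopen t S"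
  unfolding SafeToOpen_def by auto

lemma Controller_consistent:
  assumes "0 < dopen" and "\<forall>y. DL S y = Fin t \<longrightarrow> TS S y \<noteq> Empty"
  shows "consistent (upds dclose dopen dmin Controller t S)"
  unfolding consistent_def
proof (intro ballI impI)
  fix u u' assume u: "u \<in> upds dclose dopen dmin Controller t S"
    and u': "u' \<in> upds dclose dopen dmin Controller t S" and "uloc u = uloc u'"
  have no_open_and_close: False
    if close_upd: "UDir Close \<in> upds dclose dopen dmin Controller t S"
      and open_upd: "UDir Open \<in> upds dclose dopen dmin Controller t S"
  proof -
    obtain x where "DL S x = Fin t" using close_upd by (auto simp: UDir_mem_upds_Controller)
    moreover have "SafeToOpen dopen t S" using open_upd by (simp add: UDir_mem_upds_Controller)
    ultimately show False using assms not_SafeToOpen[of S x t t dopen] by auto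
  qed
  show "u = u'"
  proof (cases u)
    case (UDL x v)
    with \<open>uloc u = uloc u'\<close> obtain v' where "u' = UDL x v'" by (cases u') auto
    with u u' UDL show ?thesis by (auto simp: UDL_mem_upds_Controller)
  next
    case (UDir d)
    with \<open>uloc u = uloc u'\<close> obtain d' where "u' = UDir d'" by (cases u') auto
    with u u' UDir no_open_and_close show ?thesis by (cases d; cases d') auto
  next
    case (UGS g)
    with u show ?thesis by (simp add: UGS_notin_upds_Controller)
  qed
qed

section \<open>Invariants of runs\<close>

lemma is_run_pre_run: "is_run dclose dopen dmin \<rho> \<Longrightarrow> pre_run \<rho>"
  by (simp add: is_run_def)

lemma run_lval_internal:
  assumes "is_run dclose dopen dmin \<rho>" "0 < t"
  shows "DL (lval \<rho> t) = DL (\<rho> t)" "Dir (lval \<rho> t) = Dir (\<rho> t)"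
  using assms unfolding is_run_def by metis+

lemma run_rval_exec:
  assumes "is_run dclose dopen dmin \<rho>" "0 \<le> t" "rval \<rho> t \<noteq> \<rho> t"
  obtains M where "rval \<rho> t = exec dclose dopen dmin M t (\<rho> t)"
  using assms unfolding is_run_def by metis

lemma run_rval_DL_cases:
  assumes "is_run dclose dopen dmin \<rho>" "0 \<le> t"
  shows "DL (rval \<rho> t) x = DL (\<rho> t) x \<or>
         UDL x (DL (rval \<rho> t) x) \<in> upds dclose dopen dmin Controller t (\<rho> t)"
proof (cases "rval \<rho> t = \<rho> t")
  case False
  with assms obtain M where "rval \<rho> t = exec dclose dopen dmin M t (\<rho> t)" by (rule run_rval_exec)
  then show ?thesis using exec_DL_cases by metis
qed simp

lemma run_rval_Dir_cases:
  assumes "is_run dclose dopen dmin \<rho>" "0 \<le> t"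
  shows "Dir (rval \<rho> t) = Dir (\<rho> t) \<or>
         UDir (Dir (rval \<rho> t)) \<in> upds dclose dopen dmin Controller t (\<rho> t)"
proof (cases "rval \<rho> t = \<rho> t")
  case False
  with assms obtain M where "rval \<rho> t = exec dclose dopen dmin M t (\<rho> t)" by (rule run_rval_exec)
  then show ?thesis using exec_Dir_cases by metis
qed simp

lemma run_rval_DL_keep:
  assumes "is_run dclose dopen dmin \<rho>" "0 \<le> t" "DL (\<rho> t) x \<noteq> Infty" "TS (\<rho> t) x \<noteq> Empty"
  shows "DL (rval \<rho> t) x = DL (\<rho> t) x"
  using run_rval_DL_cases[OF assms(1,2), of x] assms(3,4) by (auto simp: UDL_mem_upds_Controller)

text \<open>At each moment the environment changes only external functions, so
  \<open>\<rho> t\<close> agrees with its left limit on \<open>DL\<close> and \<open>Dir\<close>, while the modules act only on the right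
  limit \<open>rval \<rho> t\<close>.\<close>

lemma run_invariant_after:
  assumes run: "is_run dclose dopen dmin \<rho>" and "0 \<le> a"
    and transfer: "\<And>s t S S'. \<Phi> s S \<Longrightarrow> s \<le> t \<Longrightarrow> DL S' = DL S \<Longrightarrow> Dir S' = Dir S \<Longrightarrow> \<Phi> t S'"
    and start: "\<Phi> a (rval \<rho> a)"
    and step: "\<And>t. a < t \<Longrightarrow> t < b \<Longrightarrow> (\<And>s. a < s \<Longrightarrow> s \<le> t \<Longrightarrow> \<Phi> s (\<rho> s)) \<Longrightarrow> \<Phi> t (rval \<rho> t)"
    and "a < t" "t < b"
  shows "\<Phi> t (\<rho> t)"
proof -
  have pre: "pre_run \<rho>" using run by (rule is_run_pre_run)
  let ?P = "\<lambda>t. a < t \<and> t < b \<longrightarrow> \<Phi> t (\<rho> t)"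
  have "?P t"
  proof (rule real_induct_ge[of a])
    fix t assume IH: "\<And>u. a \<le> u \<Longrightarrow> u < t \<Longrightarrow> ?P u"
    show "?P t"
    proof
      assume t: "a < t \<and> t < b"
      then obtain s where s: "a < s" "s < t" "\<rho> s = lval \<rho> t"
        using pre_run_lval_between[OF pre \<open>0 \<le> a\<close>] by blast
      then have "\<Phi> s (lval \<rho> t)" using IH[of s] t by auto
      moreover have "DL (\<rho> t) = DL (lval \<rho> t)" "Dir (\<rho> t) = Dir (lval \<rho> t)"
        using run_lval_internal[OF run, of t] t \<open>0 \<le> a\<close> by simp_all
      ultimately show "\<Phi> t (\<rho> t)" using transfer \<open>s < t\<close> by (simp add: less_imp_le)
    qed
  next
    fix t assume "a \<le> t" and IH: "\<And>u. a \<le> u \<Longrightarrow> u \<le> t \<Longrightarrow> ?P u"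
    have after_t: "\<Phi> t (rval \<rho> t)" if "t < b"
    proof (cases "t = a")
      case False
      then show ?thesis using step[of t] IH \<open>a \<le> t\<close> \<open>t < b\<close> by auto
    qed (use start in simp)
    obtain e where "e > 0" and e: "\<forall>s. t < s \<and> s < t + e \<longrightarrow> \<rho> s = rval \<rho> t"
      using pre_run_rval[OF pre, of t] \<open>0 \<le> a\<close> \<open>a \<le> t\<close> by auto
    have "?P s" if "t < s" "s < t + e" for s
    proof
      assume "a < s \<and> s < b"
      then have "\<Phi> t (rval \<rho> t)" using after_t \<open>t < s\<close> by simp
      moreover have "\<rho> s = rval \<rho> t" using e that by simp
      ultimately show "\<Phi> s (\<rho> s)" using transfer \<open>t < s\<close> by (simp add: less_imp_le)
    qed
    with \<open>e > 0\<close> show "\<exists>e>0. \<forall>s. t < s \<and> s < t + e \<longrightarrow> ?P s" by blast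
  qed (use \<open>a < t\<close> in simp)
  with \<open>a < t\<close> \<open>t < b\<close> show ?thesis by simp
qed

lemma run_invariant_from:
  assumes run: "is_run dclose dopen dmin \<rho>" and "0 \<le> a"
    and transfer: "\<And>s t S S'. \<Phi> s S \<Longrightarrow> s \<le> t \<Longrightarrow> DL S' = DL S \<Longrightarrow> Dir S' = Dir S \<Longrightarrow> \<Phi> t S'"
    and start: "\<Phi> a (\<rho> a)"
    and step: "\<And>t. a \<le> t \<Longrightarrow> t < b \<Longrightarrow> (\<And>s. a \<le> s \<Longrightarrow> s \<le> t \<Longrightarrow> \<Phi> s (\<rho> s)) \<Longrightarrow> \<Phi> t (rval \<rho> t)"
    and "a \<le> t" "t < b"
  shows "\<Phi> t (\<rho> t)"
proof (cases "t = a")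
  case False
  show ?thesis
  proof (rule run_invariant_after[where b = b and \<Phi> = \<Phi>])
    show "\<Phi> a (rval \<rho> a)" using step[of a] start \<open>a \<le> t\<close> \<open>t < b\<close> by auto
  next
    fix u assume "a < u" "u < b" and IH: "\<And>s. a < s \<Longrightarrow> s \<le> u \<Longrightarrow> \<Phi> s (\<rho> s)"
    have "\<Phi> s (\<rho> s)" if "a \<le> s" "s \<le> u" for s
      using IH[of s] start that by (cases "s = a") auto
    then show "\<Phi> u (rval \<rho> u)" using step[of u] \<open>a < u\<close> \<open>u < b\<close> by simp
  qed (use run \<open>0 \<le> a\<close> transfer False \<open>a \<le> t\<close> \<open>t < b\<close> in auto)
qed (use start in simp)

lemma run_becomes_Dir:
  assumes "is_run dclose dopen dmin \<rho>" "becomes \<rho> Dir d t"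
  shows "Dir (\<rho> t) \<noteq> d" "Dir (rval \<rho> t) = d"
  using assms run_lval_internal(2)[OF assms(1), of t] unfolding becomes_def by auto

lemma run_Dir_Close_deadline:
  assumes "is_run dclose dopen dmin \<rho>" "0 \<le> t" "Dir (\<rho> t) \<noteq> Close" "Dir (rval \<rho> t) = Close"
  obtains x where "DL (\<rho> t) x = Fin t"
  using run_rval_Dir_cases[OF assms(1,2)] assms(3,4) that by (auto simp: UDir_mem_upds_Controller)

lemma run_deadline_stays_while_coming:
  assumes run: "is_run dclose dopen dmin \<rho>" and "0 \<le> a" "DL (\<rho> a) x = Fin d"
    and coming: "\<forall>s. a \<le> s \<and> s < b \<longrightarrow> TS (\<rho> s) x = Coming"
    and "a \<le> t" "t < b"
  shows "DL (\<rho> t) x = Fin d"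
proof (rule run_invariant_from[where \<Phi> = "\<lambda>_ S. DL S x = Fin d", OF run \<open>0 \<le> a\<close>])
  fix u assume "a \<le> u" "u < b" "\<And>s. a \<le> s \<Longrightarrow> s \<le> u \<Longrightarrow> DL (\<rho> s) x = Fin d"
  then show "DL (rval \<rho> u) x = Fin d"
    using run_rval_DL_keep[OF run, of u x] coming \<open>0 \<le> a\<close> by auto
qed (use assms in auto)

lemma run_Dir_stays_Close:
  assumes run: "is_run dclose dopen dmin \<rho>" and "0 \<le> a" "Dir (rval \<rho> a) = Close"
    and unsafe: "\<forall>s. a < s \<and> s < b \<longrightarrow> \<not> SafeToOpen dopen s (\<rho> s)"
    and "a < t" "t < b"
  shows "Dir (\<rho> t) = Close"
proof (rule run_invariant_after[where \<Phi> = "\<lambda>_ S. Dir S = Close", OF run \<open>0 \<le> a\<close>])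
  fix u assume "a < u" "u < b" "\<And>s. a < s \<Longrightarrow> s \<le> u \<Longrightarrow> Dir (\<rho> s) = Close"
  then show "Dir (rval \<rho> u) = Close"
    using run_rval_Dir_cases[OF run, of u] unsafe \<open>0 \<le> a\<close>
    by (auto simp: UDir_mem_upds_Controller)
qed (use assms in auto)

lemma significant_moments_grow:
  fixes ts :: "nat \<Rightarrow> real"
  assumes "ts 0 = 0" "\<And>i. ts i < ts (Suc i)" "\<And>i. dmin \<le> ts (3*i+2) - ts (3*i+1)"
  shows "real i * dmin \<le> ts (3*i)"
proof (induction i)
  case (Suc i)
  have "3*i+3 = Suc (3*i+2)" by simp
  then have "ts (3*i) < ts (3*i+1)" "ts (3*i+2) < ts (3*i+3)"
    using assms(2) by (metis Suc_eq_plus1)+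
  with Suc.IH assms(3)[of i] show ?case by (simp add: algebra_simps)
qed (simp add: assms(1))

lemma significant_moment_before:
  fixes ts :: "nat \<Rightarrow> real"
  assumes D_def: "D = (\<lambda>i. case fin of None \<Rightarrow> True | Some k \<Rightarrow> i \<le> k)"
    and "ts 0 = 0" and incr: "\<forall>i. D (Suc i) \<longrightarrow> ts i < ts (Suc i)"
    and long: "\<forall>i. D (3*i+2) \<longrightarrow> dmin \<le> ts (3*i+2) - ts (3*i+1)"
    and "0 < dmin" "0 \<le> t"
  obtains k where "D k" "ts k \<le> t" "D (Suc k) \<Longrightarrow> t < ts (Suc k)"
proof (cases fin)
  case (Some K)
  show thesis
  proof (cases "ts K \<le> t")
    case False
    then obtain i where "i < K" "ts i \<le> t" "t < ts (Suc i)"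
      using ex_bracketing_index[of ts t K] \<open>ts 0 = 0\<close> \<open>0 \<le> t\<close> by auto
    with Some show thesis by (intro that[of i]) (auto simp: D_def)
  qed (use Some in \<open>auto intro: that simp: D_def\<close>)
next
  case None
  then have "ts i < ts (Suc i)" "dmin \<le> ts (3*i+2) - ts (3*i+1)" for i
    using incr long by (simp_all add: D_def)
  then have grow: "real n * dmin \<le> ts (3*n)" for n
    using significant_moments_grow \<open>ts 0 = 0\<close> by blast
  obtain n where "t < real n * dmin" using ex_less_of_nat_mult[OF \<open>0 < dmin\<close>] by blast
  then obtain i where "ts i \<le> t" "t < ts (Suc i)"
    using ex_bracketing_index[of ts t "3*n"] grow[of n] \<open>ts 0 = 0\<close> \<open>0 \<le> t\<close> by force
  with None show thesis by (intro that[of i]) (simp_all add: D_def)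
qed

lemma status_coming_interval:
  fixes ts :: "nat \<Rightarrow> real" and status :: "real \<Rightarrow> tstat"
  assumes D_def: "D = (\<lambda>i. case fin of None \<Rightarrow> True | Some k \<Rightarrow> i \<le> k)"
    and "ts 0 = 0" and incr: "\<forall>i. D (Suc i) \<longrightarrow> ts i < ts (Suc i)"
    and empty: "\<forall>i. D (3*i+1) \<longrightarrow> (\<forall>s. ts (3*i) \<le> s \<and> s < ts (3*i+1) \<longrightarrow> status s = Empty)"
    and coming: "\<forall>i. D (3*i+2) \<longrightarrow> (\<forall>s. ts (3*i+1) \<le> s \<and> s < ts (3*i+2) \<longrightarrow> status s = Coming) \<and>
                   dmin \<le> ts (3*i+2) - ts (3*i+1) \<and> ts (3*i+2) - ts (3*i+1) \<le> dmax"
    and crossing: "\<forall>i. D (3*i+3) \<longrightarrow> (\<forall>s. ts (3*i+2) \<le> s \<and> s < ts (3*i+3) \<longrightarrow> status s = Incrossing)"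
    and final: "\<forall>k. fin = Some k \<longrightarrow> 3 dvd k \<and> (\<forall>s. ts k \<le> s \<longrightarrow> status s = Empty)"
    and "0 < dmin" "0 \<le> t" "status t = Coming"
  obtains c e where "0 \<le> c" "c \<le> t" "t < e" "dmin \<le> e - c" "\<forall>s. c \<le> s \<and> s < e \<longrightarrow> status s = Coming"
proof -
  have ts_nonneg: "D k \<Longrightarrow> 0 \<le> ts k" for k
  proof (induction k)
    case (Suc k)
    then have "D k" by (simp add: D_def split: option.splits)
    with Suc incr show ?case by force
  qed (simp add: \<open>ts 0 = 0\<close>)
  obtain k where k: "D k" "ts k \<le> t" "D (Suc k) \<Longrightarrow> t < ts (Suc k)"
    using significant_moment_before[OF D_def \<open>ts 0 = 0\<close> incr _ \<open>0 < dmin\<close> \<open>0 \<le> t\<close>] coming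
    by blast
  have "D (Suc k)"
  proof (rule ccontr)
    assume "\<not> D (Suc k)"
    with \<open>D k\<close> have "fin = Some k" by (simp add: D_def split: option.splits)
    with final \<open>ts k \<le> t\<close> \<open>status t = Coming\<close> show False by auto
  qed
  with k have "t < ts (Suc k)" by simp
  have "\<exists>i. k = 3*i \<or> k = 3*i+1 \<or> k = 3*i+2" by presburger
  then obtain i where "k = 3*i \<or> k = 3*i+1 \<or> k = 3*i+2" by blast
  then consider "k = 3*i" | "k = 3*i+2" | "k = 3*i+1" by blast
  then show thesis
  proof cases
    case 1
    with empty \<open>D (Suc k)\<close> k(2) \<open>t < ts (Suc k)\<close> \<open>status t = Coming\<close> show thesis by auto
  next
    case 2
    then have "Suc k = 3*i+3" by simp
    with \<open>D (Suc k)\<close> \<open>t < ts (Suc k)\<close> have "D (3*i+3)" "t < ts (3*i+3)" by simp_all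
    moreover have "ts (3*i+2) \<le> t" using k(2) 2 by simp
    ultimately have "status t = Incrossing" using crossing by blast
    with \<open>status t = Coming\<close> show thesis by simp
  next
    case 3
    with coming \<open>D (Suc k)\<close> have "\<forall>s. ts k \<le> s \<and> s < ts (Suc k) \<longrightarrow> status s = Coming"
      and "dmin \<le> ts (Suc k) - ts k" by auto
    with ts_nonneg[OF \<open>D k\<close>] k(2) \<open>t < ts (Suc k)\<close> show thesis by (intro that) auto
  qed
qed

lemma train_motion_coming_interval:
  assumes "train_motion dmin dmax \<rho> x" "0 < dmin" "0 \<le> t" "TS (\<rho> t) x = Coming"
  obtains c e where "0 \<le> c" "c \<le> t" "t < e" "dmin \<le> e - c"
    "\<forall>s. c \<le> s \<and> s < e \<longrightarrow> TS (\<rho> s) x = Coming"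
proof -
  from assms(1) obtain ts fin where H: "let D = (\<lambda>i. case fin of None \<Rightarrow> True | Some k \<Rightarrow> i \<le> k) in
         ts 0 = 0 \<and>
         (\<forall>i. D (Suc i) \<longrightarrow> ts i < ts (Suc i)) \<and>
         (\<forall>i. D (3*i+1) \<longrightarrow> (\<forall>s. ts (3*i) \<le> s \<and> s < ts (3*i+1) \<longrightarrow> TS (\<rho> s) x = Empty)) \<and>
         (\<forall>i. D (3*i+2) \<longrightarrow> (\<forall>s. ts (3*i+1) \<le> s \<and> s < ts (3*i+2) \<longrightarrow> TS (\<rho> s) x = Coming) \<and>
               dmin \<le> ts (3*i+2) - ts (3*i+1) \<and> ts (3*i+2) - ts (3*i+1) \<le> dmax) \<and>
         (\<forall>i. D (3*i+3) \<longrightarrow> (\<forall>s. ts (3*i+2) \<le> s \<and> s < ts (3*i+3) \<longrightarrow> TS (\<rho> s) x = Incrossing)) \<and>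
         (\<forall>k. fin = Some k \<longrightarrow> 3 dvd k \<and> (\<forall>s. ts k \<le> s \<longrightarrow> TS (\<rho> s) x = Empty))"
    unfolding train_motion_def by blast
  show thesis
    by (rule status_coming_interval[where status = "\<lambda>s. TS (\<rho> s) x" and ts = ts and fin = fin
          and dmin = dmin and dmax = dmax and t = t, OF refl])
      (use H[unfolded Let_def] assms(2-4) that in blast)+
qed

section \<open>The deadline invariant\<close>

locale regular_crossing_run =
  fixes dclose dopen dmin dmax :: real and \<rho> :: "real \<Rightarrow> 'tr st"
  assumes dclose_pos: "0 < dclose" and dopen_pos: "0 < dopen" and dclose_less_dmin: "dclose < dmin"
    and regular: "regular_run dclose dopen dmin dmax \<rho>"
begin

lemma run: "is_run dclose dopen dmin \<rho>"
  using regular by (simp add: regular_run_def)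

text \<open>Here \<open>d - W\<close>, \<open>W = dmin - dclose\<close>, is the moment the deadline \<open>d\<close> was set, when the track
  started coming, and \<open>d + dclose = (d - W) + dmin\<close>.\<close>

definition deadline_inv :: "real \<Rightarrow> 'tr st \<Rightarrow> bool" where
  "deadline_inv t S \<longleftrightarrow> (\<forall>x d. DL S x = Fin d \<longrightarrow> d - (dmin - dclose) \<le> t \<and>
     (\<forall>s. d - (dmin - dclose) \<le> s \<and> s < d + dclose \<longrightarrow> TS (\<rho> s) x = Coming))"

lemma deadline_inv_mono: "deadline_inv s S \<Longrightarrow> s \<le> t \<Longrightarrow> DL S' = DL S \<Longrightarrow> deadline_inv t S'"
  unfolding deadline_inv_def by force

lemma deadline_inv_Controller_consistent:
  assumes "deadline_inv t (\<rho> t)"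
  shows "consistent (upds dclose dopen dmin Controller t (\<rho> t))"
proof (rule Controller_consistent[OF dopen_pos], intro allI impI)
  fix y assume "DL (\<rho> t) y = Fin t"
  with assms have "TS (\<rho> t) y = Coming"
    using dclose_pos dclose_less_dmin unfolding deadline_inv_def by fastforce
  then show "TS (\<rho> t) y \<noteq> Empty" by simp
qed

lemma Controller_sets_deadline:
  assumes "0 \<le> t" "deadline_inv t (\<rho> t)" "TS (\<rho> t) x = Coming" "DL (\<rho> t) x = Infty"
  shows "DL (rval \<rho> t) x = Fin (t + (dmin - dclose))"
proof -
  have cons: "consistent (upds dclose dopen dmin Controller t (\<rho> t))"
    using assms(2) by (rule deadline_inv_Controller_consistent)
  have upd: "UDL x (Fin (t + (dmin - dclose))) \<in> upds dclose dopen dmin Controller t (\<rho> t)"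
    using assms(3,4) by (simp add: UDL_mem_upds_Controller)
  with cons assms(4) have "enabled dclose dopen dmin Controller t (\<rho> t)"
    unfolding enabled_def by force
  then have "fires dclose dopen dmin \<rho> Controller t"
    using regular \<open>0 \<le> t\<close> unfolding regular_run_def immediate_def by blast
  then obtain M where "Controller \<in> M" "rval \<rho> t = exec dclose dopen dmin M t (\<rho> t)"
    unfolding fires_def by blast
  with cons upd show ?thesis by (simp add: exec_DL_eqI)
qed

lemma deadline_set_while_coming:
  assumes "0 \<le> c" "deadline_inv c (\<rho> c)"
    and coming: "\<forall>s. c \<le> s \<and> s < e \<longrightarrow> TS (\<rho> s) x = Coming"
    and "c < t" "t < e"
  shows "DL (\<rho> t) x \<noteq> Infty"
proof (rule run_invariant_after[where \<Phi> = "\<lambda>_ S. DL S x \<noteq> Infty", OF run \<open>0 \<le> c\<close>])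
  have "TS (\<rho> c) x = Coming" using coming \<open>c < t\<close> \<open>t < e\<close> by simp
  then show "DL (rval \<rho> c) x \<noteq> Infty"
    using Controller_sets_deadline[OF assms(1,2)] run_rval_DL_keep[OF run \<open>0 \<le> c\<close>] by fastforce
next
  fix u assume "c < u" "u < e" "\<And>s. c < s \<Longrightarrow> s \<le> u \<Longrightarrow> DL (\<rho> s) x \<noteq> Infty"
  then show "DL (rval \<rho> u) x \<noteq> Infty"
    using run_rval_DL_keep[OF run, of u x] coming \<open>0 \<le> c\<close> by auto
qed (use assms in auto)

lemma new_deadline_coming:
  assumes "0 \<le> u" and inv: "\<And>s. 0 \<le> s \<Longrightarrow> s \<le> u \<Longrightarrow> deadline_inv s (\<rho> s)"
    and "TS (\<rho> u) x = Coming" "DL (\<rho> u) x = Infty"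
  shows "\<forall>s. u \<le> s \<and> s < u + dmin \<longrightarrow> TS (\<rho> s) x = Coming"
proof -
  obtain c e where "0 \<le> c" "c \<le> u" "u < e" "dmin \<le> e - c"
    and coming: "\<forall>s. c \<le> s \<and> s < e \<longrightarrow> TS (\<rho> s) x = Coming"
    using train_motion_coming_interval[of dmin dmax \<rho> x u] regular assms(1,3)
      dclose_pos dclose_less_dmin unfolding regular_run_def by auto
  \<comment> \<open>Had x been coming since some c < u, the Controller would have set its deadline at c.\<close>
  have "c = u"
  proof (rule ccontr)
    assume "c \<noteq> u"
    with \<open>c \<le> u\<close> \<open>u < e\<close> have "DL (\<rho> u) x \<noteq> Infty"
      using deadline_set_while_coming[OF \<open>0 \<le> c\<close> inv[OF \<open>0 \<le> c\<close> \<open>c \<le> u\<close>] coming] by simp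
    with assms(4) show False by simp
  qed
  with coming \<open>dmin \<le> e - c\<close> show ?thesis by auto
qed

lemma deadline_inv_holds:
  assumes "0 \<le> t"
  shows "deadline_inv t (\<rho> t)"
proof (rule run_invariant_from[where \<Phi> = deadline_inv and b = "t + 1", OF run order.refl])
  show "deadline_inv 0 (\<rho> 0)"
    using regular unfolding regular_run_def initial_def deadline_inv_def by simp
next
  fix u assume "0 \<le> u" and IH: "\<And>s. 0 \<le> s \<Longrightarrow> s \<le> u \<Longrightarrow> deadline_inv s (\<rho> s)"
  show "deadline_inv u (rval \<rho> u)"
    unfolding deadline_inv_def
  proof (intro allI impI)
    fix x d assume "DL (rval \<rho> u) x = Fin d"
    then consider "DL (\<rho> u) x = Fin d"
      | "TS (\<rho> u) x = Coming" "DL (\<rho> u) x = Infty" "d = u + (dmin - dclose)"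
      using run_rval_DL_cases[OF run \<open>0 \<le> u\<close>, of x] by (auto simp: UDL_mem_upds_Controller)
    then show "d - (dmin - dclose) \<le> u \<and>
      (\<forall>s. d - (dmin - dclose) \<le> s \<and> s < d + dclose \<longrightarrow> TS (\<rho> s) x = Coming)"
    proof cases
      case 1
      with IH[of u] \<open>0 \<le> u\<close> show ?thesis unfolding deadline_inv_def by blast
    next
      case 2
      with new_deadline_coming[OF \<open>0 \<le> u\<close> IH] show ?thesis by auto
    qed
  qed
qed (use deadline_inv_mono assms in auto)
end

theorem mainTheorem12:
  fixes \<rho> :: "real \<Rightarrow> ('tr::finite) st"
    and dclose dopen dmin dmax \<alpha> :: real
  assumes "0 < dclose" and "0 < dopen" and "0 < dmin" and "0 < dmax"
    and "dclose < dmin" and "dmin \<le> dmax"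
    and "regular_run dclose dopen dmin dmax \<rho>"
    and "0 \<le> \<alpha>"
    and "becomes \<rho> Dir Close \<alpha>"
  shows "\<forall>s. \<alpha> < s \<and> s < \<alpha> + dclose \<longrightarrow> Dir (\<rho> s) = Close"
proof -
  interpret regular_crossing_run dclose dopen dmin dmax \<rho>
    using assms by unfold_locales
  have "Dir (\<rho> \<alpha>) \<noteq> Close" "Dir (rval \<rho> \<alpha>) = Close"
    using run_becomes_Dir[OF run assms(9)] by simp_all
  then obtain x where deadline: "DL (\<rho> \<alpha>) x = Fin \<alpha>"
    using run_Dir_Close_deadline[OF run \<open>0 \<le> \<alpha>\<close>] by blast
  then have coming: "\<forall>s. \<alpha> \<le> s \<and> s < \<alpha> + dclose \<longrightarrow> TS (\<rho> s) x = Coming"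
    using deadline_inv_holds[OF \<open>0 \<le> \<alpha>\<close>] unfolding deadline_inv_def by force
  have "\<not> SafeToOpen dopen s (\<rho> s)" if "\<alpha> < s" "s < \<alpha> + dclose" for s
  proof (rule not_SafeToOpen)
    show "TS (\<rho> s) x \<noteq> Empty" using coming that by simp
    show "DL (\<rho> s) x = Fin \<alpha>"
      using run_deadline_stays_while_coming[OF run \<open>0 \<le> \<alpha>\<close> deadline coming] that by simp
  qed (use that \<open>0 < dopen\<close> in simp)
  then show ?thesis
    using run_Dir_stays_Close[OF run \<open>0 \<le> \<alpha>\<close> \<open>Dir (rval \<rho> \<alpha>) = Close\<close>] by blast
qed

end
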